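(* Let $M$ be an $n\times n$ exceptional extremal copositive matrix that has exactly $n$ representative minimal zeros $\mathbf w_1,\dots,\mathbf w_n$, and let $W=[\mathbf w_1\ \mathbf w_2\ \cdots\ \mathbf w_n]$. Then every completely positive $n\times n$ matrix $A$ with $\operatorname{trace}(AM)=0$ has the form $A=WCW^T$ for some $n\times n$ completely positive matrix $C$, with $\operatorname{cp\text{-}rank}A=\operatorname{cp\text{-}rank}C$, and the number of CP factorizations (respectively, minimal CP factorizations) of $A$ equals the number of CP factorizations (respectively, minimal CP factorizations) of $C$.
   Context: A symmetric $n\times n$ matrix $A$ is completely positive if $A=BB^T$ for some entrywise nonnegative $n\times k$ matrix $B$; such an equality is a CP factorization of $A$. Only CP factorizations in which the columns of $B$ are pairwise linearly independent are considered, and two CP factorizations $A=BB^T=CC^T$ are considered equal if $C=BP$ for a permutation matrix $P$. The cp-rank of $A$ is the minimal number of columns of such a nonnegative $B$; a CP factorization with that many columns is called minimal. A symmetric matrix $M$ is copositive if $\mathbf x^TM\mathbf x\ge0$ for all $\mathbf x\in\mathbb R^n_+$; $\mathcal{COP}_n$ denotes the cone of such matrices, which is the dual of the completely positive cone under $\langle X,Y\rangle=\operatorname{trace}(XY)$. A copositive $M$ is exceptional if it is not the sum of a positive semidefinite matrix and a symmetric entrywise nonnegative matrix, and extremal if it generates an extreme ray of $\mathcal{COP}_n$. A zero of $M$ is a nonzero $\mathbf b\in\mathbb R^n_+$ with $\mathbf b^TM\mathbf b=0$; it is a minimal zero if its support does not strictly contain the support of another zero. A set of minimal zeros is representative if every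 minimal zero of $M$ is a positive scalar multiple of exactly one vector in the set. Known facts (Hildebrand), which may be used: every zero of a copositive $M$ is a nonnegative combination of finitely many minimal zeros, and an exceptional extremal copositive matrix in $\mathcal{COP}_n$ has at least $n$ representative minimal zeros, and these span $\mathbb R^n$. *)

theory Defs
  imports "HOL-Analysis.Analysis" "HOL-Library.Equipollence"
begin

definition symmetric_mat :: "real^'n^'n \<Rightarrow> bool" where
  "symmetric_mat M \<longleftrightarrow> transpose M = M"

definition nonneg_vec :: "real^'n \<Rightarrow> bool" where
  "nonneg_vec x \<longleftrightarrow> (\<forall>i. x $ i \<ge> 0)"

text \<open>outer product b b^T, i.e. the contribution of one column of B to B B^T\<close>
definition outer :: "real^'n \<Rightarrow> real^'n^'n" where
  "outer b = (\<chi> i j. b $ i * b $ j)"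

text \<open>A = B B^T with B nonnegative n x k; the columns of B are listed in bs (k = length bs).\<close>
definition nonneg_factorization :: "real^'n^'n \<Rightarrow> (real^'n) list \<Rightarrow> bool" where
  "nonneg_factorization A bs \<longleftrightarrow>
     (\<forall>b\<in>set bs. nonneg_vec b) \<and> A = sum_list (map outer bs)"

definition completely_positive :: "real^'n^'n \<Rightarrow> bool" where
  "completely_positive A \<longleftrightarrow> (\<exists>bs. nonneg_factorization A bs)"

definition cp_rank :: "real^'n^'n \<Rightarrow> nat" where
  "cp_rank A = (LEAST k. \<exists>bs. length bs = k \<and> nonneg_factorization A bs)"

text \<open>CP factorizations with pairwise linearly independent columns, modulo column
  permutation: represented by the (finite) set of columns.\<close>
definition cp_factorizations :: "real^'n^'n \<Rightarrow> (real^'n) set set" where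
  "cp_factorizations A =
     {S. finite S \<and> (\<forall>b\<in>S. nonneg_vec b)
         \<and> (\<forall>b\<in>S. \<forall>c\<in>S. b \<noteq> c \<longrightarrow> independent {b, c})
         \<and> A = (\<Sum>b\<in>S. outer b)}"

definition minimal_cp_factorizations :: "real^'n^'n \<Rightarrow> (real^'n) set set" where
  "minimal_cp_factorizations A = {S\<in>cp_factorizations A. card S = cp_rank A}"

definition copositive :: "real^'n^'n \<Rightarrow> bool" where
  "copositive M \<longleftrightarrow> symmetric_mat M \<and> (\<forall>x. nonneg_vec x \<longrightarrow> x \<bullet> (M *v x) \<ge> 0)"

definition psd :: "real^'n^'n \<Rightarrow> bool" where
  "psd M \<longleftrightarrow> symmetric_mat M \<and> (\<forall>x. x \<bullet> (M *v x) \<ge> 0)"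

definition nonneg_mat :: "real^'n^'n \<Rightarrow> bool" where
  "nonneg_mat N \<longleftrightarrow> (\<forall>i j. N $ i $ j \<ge> 0)"

definition exceptional :: "real^'n^'n \<Rightarrow> bool" where
  "exceptional M \<longleftrightarrow> copositive M \<and>
     \<not> (\<exists>P N. psd P \<and> symmetric_mat N \<and> nonneg_mat N \<and> M = P + N)"

definition extremal :: "real^'n^'n \<Rightarrow> bool" where
  "extremal M \<longleftrightarrow> copositive M \<and> M \<noteq> 0 \<and>
     (\<forall>X Y. copositive X \<and> copositive Y \<and> M = X + Y \<longrightarrow> (\<exists>a\<ge>0. X = a *\<^sub>R M))"

definition is_zero :: "real^'n^'n \<Rightarrow> real^'n \<Rightarrow> bool" where
  "is_zero M b \<longleftrightarrow> nonneg_vec b \<and> b \<noteq> 0 \<and> b \<bullet> (M *v b) = 0"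

definition supp :: "real^'n \<Rightarrow> 'n set" where
  "supp b = {i. b $ i \<noteq> 0}"

definition minimal_zero :: "real^'n^'n \<Rightarrow> real^'n \<Rightarrow> bool" where
  "minimal_zero M b \<longleftrightarrow> is_zero M b \<and> \<not> (\<exists>c. is_zero M c \<and> supp c \<subset> supp b)"

definition representative_zeros :: "real^'n^'n \<Rightarrow> (real^'n) set \<Rightarrow> bool" where
  "representative_zeros M R \<longleftrightarrow> (\<forall>r\<in>R. minimal_zero M r) \<and>
     (\<forall>z. minimal_zero M z \<longrightarrow> (\<exists>!r\<in>R. \<exists>t>0. z = t *\<^sub>R r))"

definition col_matrix :: "('n \<Rightarrow> real^'n) \<Rightarrow> real^'n^'n" where
  "col_matrix w = (\<chi> i j. w j $ i)"

end

theory Submission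
  imports Defs
begin

text \<open>
  A completely positive A with trace (A M) = 0 factors through zeros of M: every column b of a
  nonnegative factorization satisfies b^T M b = 0. Peeling off minimal zeros shows that every
  zero of M lies in the cone W R^n_+. The zeros also span R^n: otherwise some h \<noteq> 0 is
  orthogonal to all of them, and an induction over faces of R^n_+ combined with compactness of
  the nonnegative unit sphere gives \<epsilon> > 0 with \<epsilon> (h^T x)^2 \<le> x^T M x on R^n_+. Then M - \<epsilon> h h^T is
  copositive, extremality makes M a positive multiple of h h^T, and M would not be exceptional.
  Hence W is invertible, W^-1 maps the columns of every factorization of A into R^n_+ and W maps
  R^n_+ into itself, so the congruence C = W^-1 A W^-T matches the factorizations of A and C
  column by column.
\<close>

section \<open>Quadratic forms\<close>

lemma inner_real_vec: "(x::real^'n) \<bullet> y = (\<Sum>i\<in>UNIV. x$i * y$i)"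
  by (simp add: inner_vec_def)

lemma matrix_vector_mult_uminus: "(M::real^'n^'n) *v (- x) = - (M *v x)"
  by (simp add: vec_eq_iff matrix_vector_mult_def sum_negf)

lemma continuous_on_quad_form: "continuous_on UNIV (\<lambda>x::real^'n. x \<bullet> (M *v x))"
  by (intro continuous_intros linear_continuous_on matrix_vector_mul_bounded_linear)

lemma symmetric_bilinear_commute:
  fixes M :: "real^'n^'n"
  assumes "symmetric_mat M"
  shows "u \<bullet> (M *v v) = v \<bullet> (M *v u)"
proof -
  have "u \<bullet> (M *v v) = (u v* M) \<bullet> v" by (simp add: dot_lmul_matrix)
  also have "u v* M = M *v u"
    using assms unfolding symmetric_mat_def by (metis transpose_matrix_vector)
  finally show ?thesis by (simp add: inner_commute)
qed

lemma quad_form_add: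
  fixes M :: "real^'n^'n"
  assumes "symmetric_mat M"
  shows "(u + v) \<bullet> (M *v (u + v)) = u \<bullet> (M *v u) + 2 * (v \<bullet> (M *v u)) + v \<bullet> (M *v v)"
  using symmetric_bilinear_commute[OF assms, of u v]
  by (simp add: matrix_vector_right_distrib inner_add_left inner_add_right)

lemma quad_form_diff_isotropic:
  fixes M :: "real^'n^'n"
  assumes "symmetric_mat M" and "z \<bullet> (M *v z) = 0" and "z \<bullet> (M *v x) = 0"
  shows "(x - t *\<^sub>R z) \<bullet> (M *v (x - t *\<^sub>R z)) = x \<bullet> (M *v x)"
  using quad_form_add[OF assms(1), of x "(-t) *\<^sub>R z"] assms(2,3)
  by (simp add: matrix_vector_mult_scaleR matrix_vector_mult_uminus)

lemma bilinear_abs_bound: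
  fixes M :: "real^'n^'n"
  shows "\<bar>u \<bullet> (M *v v)\<bar> \<le> (\<Sum>i\<in>UNIV. \<Sum>j\<in>UNIV. \<bar>M$i$j\<bar>) * (\<Sum>i\<in>UNIV. \<bar>u$i\<bar>) * norm v"
proof -
  define Bm where "Bm = (\<Sum>i\<in>UNIV. \<Sum>j\<in>UNIV. \<bar>M$i$j\<bar>)"
  have row: "\<bar>(M *v v)$i\<bar> \<le> Bm * norm v" for i
  proof -
    have "\<bar>(M *v v)$i\<bar> \<le> (\<Sum>j\<in>UNIV. \<bar>M$i$j * v$j\<bar>)"
      unfolding matrix_vector_mult_def by (simp add: sum_abs)
    also have "\<dots> \<le> (\<Sum>j\<in>UNIV. \<bar>M$i$j\<bar>) * norm v"
      unfolding sum_distrib_right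
      by (intro sum_mono) (simp add: abs_mult mult_left_mono component_le_norm_cart)
    also have "(\<Sum>j\<in>UNIV. \<bar>M$i$j\<bar>) \<le> Bm" unfolding Bm_def
      by (rule member_le_sum[where f="\<lambda>i. \<Sum>j\<in>UNIV. \<bar>M$i$j\<bar>"]) (auto intro: sum_nonneg)
    hence "(\<Sum>j\<in>UNIV. \<bar>M$i$j\<bar>) * norm v \<le> Bm * norm v" by (simp add: mult_right_mono)
    finally show ?thesis .
  qed
  have "\<bar>u \<bullet> (M *v v)\<bar> \<le> (\<Sum>i\<in>UNIV. \<bar>u$i * (M *v v)$i\<bar>)"
    unfolding inner_real_vec by (rule sum_abs)
  also have "\<dots> \<le> (\<Sum>i\<in>UNIV. \<bar>u$i\<bar> * (Bm * norm v))"
    by (intro sum_mono) (simp add: abs_mult mult_left_mono row)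
  also have "\<dots> = Bm * (\<Sum>i\<in>UNIV. \<bar>u$i\<bar>) * norm v"
    by (simp add: sum_distrib_left sum_distrib_right mult.commute mult.left_commute)
  finally show ?thesis unfolding Bm_def .
qed

section \<open>Zeros of a copositive matrix\<close>

lemma copositive_zero_mult_nonneg:
  fixes M :: "real^'n^'n"
  assumes cop: "copositive M" and z: "is_zero M b"
  shows "0 \<le> (M *v b)$i"
proof (rule ccontr)
  assume neg: "\<not> 0 \<le> (M *v b)$i"
  define m where "m = (M *v b)$i"
  define e where "e = axis i (1::real)"
  define k where "k = e \<bullet> (M *v e)"
  define s where "s = - m / (\<bar>k\<bar> + 1)"
  have sym: "symmetric_mat M" using cop unfolding copositive_def by simp
  have m0: "m < 0" using neg m_def by simp
  have s0: "s > 0" using m0 unfolding s_def by (intro divide_pos_pos) auto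
  have nn: "nonneg_vec (b + s *\<^sub>R e)"
    using z s0 unfolding is_zero_def nonneg_vec_def e_def by (auto simp: axis_def)
  have "0 \<le> (b + s *\<^sub>R e) \<bullet> (M *v (b + s *\<^sub>R e))"
    using cop nn unfolding copositive_def by blast
  also have "\<dots> = b \<bullet> (M *v b) + 2 * ((s *\<^sub>R e) \<bullet> (M *v b)) + (s *\<^sub>R e) \<bullet> (M *v (s *\<^sub>R e))"
    by (rule quad_form_add[OF sym])
  also have "\<dots> = s * (2 * m + s * k)"
    using z unfolding is_zero_def m_def k_def e_def
    by (simp add: matrix_vector_mult_scaleR inner_axis' algebra_simps)
  finally have "0 \<le> 2 * m + s * k" using s0 by (simp add: zero_le_mult_iff)
  moreover have "s * k \<le> - m"
  proof -
    have "s * k \<le> s * \<bar>k\<bar>" using s0 by (simp add: mult_left_mono)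
    also have "\<dots> = -m * (\<bar>k\<bar> / (\<bar>k\<bar> + 1))" by (simp add: s_def)
    also have "\<dots> \<le> -m * 1" using m0 by (intro mult_left_mono) auto
    finally show ?thesis by simp
  qed
  ultimately show False using m0 by linarith
qed

lemma copositive_zero_mult_eq_0:
  fixes M :: "real^'n^'n"
  assumes cop: "copositive M" and z: "is_zero M b" and bi: "b$i \<noteq> 0"
  shows "(M *v b)$i = 0"
proof -
  have nn: "\<forall>j\<in>UNIV. 0 \<le> b$j * (M *v b)$j"
    using copositive_zero_mult_nonneg[OF cop z] z unfolding is_zero_def nonneg_vec_def by simp
  have "(\<Sum>j\<in>UNIV. b$j * (M *v b)$j) = 0" using z unfolding is_zero_def by (simp add: inner_real_vec)
  hence "\<forall>j\<in>UNIV. b$j * (M *v b)$j = 0" using nn by (simp add: sum_nonneg_eq_0_iff)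
  thus ?thesis using bi by (metis UNIV_I mult_eq_0_iff)
qed

lemma copositive_zero_orthogonal:
  fixes M :: "real^'n^'n"
  assumes cop: "copositive M" and b: "is_zero M b" and sc: "supp c \<subseteq> supp b"
  shows "c \<bullet> (M *v b) = 0"
  unfolding inner_real_vec
proof (intro sum.neutral ballI)
  fix i
  show "c$i * (M *v b)$i = 0"
  proof (cases "c$i = 0")
    case False
    hence "b$i \<noteq> 0" using sc unfolding supp_def by auto
    thus ?thesis using copositive_zero_mult_eq_0[OF cop b] by simp
  qed simp
qed

lemma nonneg_vec_reduce_support:
  fixes x z :: "real^'n"
  assumes x: "nonneg_vec x" and z: "nonneg_vec z" and z0: "z \<noteq> 0"
  obtains j t where "z$j > 0" "t \<ge> 0" "nonneg_vec (x - t *\<^sub>R z)"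
    "supp (x - t *\<^sub>R z) \<subseteq> (supp x \<union> supp z) - {j}"
proof -
  define S where "S = supp z"
  have S: "finite S" "S \<noteq> {}" using z0 unfolding S_def supp_def by (auto simp: vec_eq_iff)
  have pos: "z$i > 0" if "i \<in> S" for i
    using that z unfolding S_def supp_def nonneg_vec_def by (metis less_eq_real_def mem_Collect_eq)
  define r where "r = Min ((\<lambda>i. x$i / z$i) ` S)"
  have "r \<in> (\<lambda>i. x$i / z$i) ` S" unfolding r_def using S by (intro Min_in) auto
  then obtain j where jS: "j \<in> S" and rj: "r = x$j / z$j" by auto
  have r0: "r \<ge> 0" using rj pos[OF jS] x unfolding nonneg_vec_def by simp
  have "0 \<le> (x - r *\<^sub>R z) $ i" for i
  proof (cases "i \<in> S")
    case True
    have "r \<le> x$i / z$i" using S True unfolding r_def by simp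
    hence "r * z$i \<le> x$i" using pos[OF True] by (simp add: pos_le_divide_eq)
    thus ?thesis by simp
  next
    case False thus ?thesis using x unfolding S_def supp_def nonneg_vec_def by simp
  qed
  hence "nonneg_vec (x - r *\<^sub>R z)" unfolding nonneg_vec_def by blast
  moreover have "supp (x - r *\<^sub>R z) \<subseteq> (supp x \<union> supp z) - {j}"
    using rj pos[OF jS] unfolding supp_def by auto
  ultimately show ?thesis using that pos[OF jS] r0 by blast
qed

lemma col_matrix_mult_vec: "col_matrix w *v x = (\<Sum>j\<in>UNIV. x$j *\<^sub>R w j)"
  by (simp add: vec_eq_iff col_matrix_def matrix_vector_mult_def sum_component mult.commute)

lemma col_matrix_mult_axis: "col_matrix w *v axis i t = t *\<^sub>R w i"
proof -
  have "(\<Sum>j\<in>UNIV. (axis i t)$j *\<^sub>R w j) = (\<Sum>j\<in>UNIV. if j = i then t *\<^sub>R w j else 0)"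
    by (intro sum.cong) (auto simp: axis_def)
  thus ?thesis by (simp add: col_matrix_mult_vec)
qed

lemma col_matrix_nonneg:
  assumes "\<And>j. nonneg_vec (w j)" and "nonneg_vec c"
  shows "nonneg_vec (col_matrix w *v c)"
  using assms unfolding nonneg_vec_def
  by (auto simp: col_matrix_mult_vec sum_component intro!: sum_nonneg)

lemma copositive_zero_peel:
  fixes M :: "real^'n^'n"
  assumes cop: "copositive M" and b: "is_zero M b" and c: "is_zero M c" and csub: "supp c \<subset> supp b"
  obtains t where "t \<ge> 0" "supp (b - t *\<^sub>R c) \<subset> supp b" "b - t *\<^sub>R c = 0 \<or> is_zero M (b - t *\<^sub>R c)"
proof -
  have sym: "symmetric_mat M" using cop unfolding copositive_def by simp
  have bnn: "nonneg_vec b" and cnn: "nonneg_vec c" "c \<noteq> 0" using b c unfolding is_zero_def by auto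
  obtain j t where j: "c$j > 0" and t: "t \<ge> 0" and nn: "nonneg_vec (b - t *\<^sub>R c)"
    and b'supp: "supp (b - t *\<^sub>R c) \<subseteq> (supp b \<union> supp c) - {j}"
    using nonneg_vec_reduce_support[OF bnn cnn] by metis
  have "j \<in> supp c" using j unfolding supp_def by simp
  hence "j \<in> supp b" using csub by blast
  hence "supp (b - t *\<^sub>R c) \<subset> supp b" using b'supp csub by auto
  moreover have "(b - t *\<^sub>R c) \<bullet> (M *v (b - t *\<^sub>R c)) = 0"
    using quad_form_diff_isotropic[OF sym] b c copositive_zero_orthogonal[OF cop b] csub
    unfolding is_zero_def by auto
  ultimately show ?thesis using that t nn unfolding is_zero_def by blast
qed

text \<open>Hildebrand's decomposition of every zero into minimal zeros.\<close>

lemma copositive_zero_in_cone: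
  fixes M :: "real^'n^'n"
  assumes cop: "copositive M"
    and mz: "\<And>z. minimal_zero M z \<Longrightarrow> \<exists>i t. t > 0 \<and> z = t *\<^sub>R w i"
  shows "is_zero M b \<Longrightarrow> \<exists>l. nonneg_vec l \<and> b = col_matrix w *v l"
proof (induction "card (supp b)" arbitrary: b rule: less_induct)
  case less
  show ?case
  proof (cases "minimal_zero M b")
    case True
    then obtain i t where t: "t > 0" "b = t *\<^sub>R w i" using mz by blast
    have "nonneg_vec (axis i t)" using t unfolding nonneg_vec_def axis_def by auto
    thus ?thesis using t by (metis col_matrix_mult_axis)
  next
    case False
    then obtain c where c: "is_zero M c" and csub: "supp c \<subset> supp b"
      using less.prems unfolding minimal_zero_def by blast
    obtain t where t: "t \<ge> 0" and b'supp: "supp (b - t *\<^sub>R c) \<subset> supp b"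
      and b': "b - t *\<^sub>R c = 0 \<or> is_zero M (b - t *\<^sub>R c)"
      using copositive_zero_peel[OF cop less.prems c csub] by blast
    obtain lc where lc: "nonneg_vec lc" "c = col_matrix w *v lc"
      using less.hyps[OF _ c] csub by (meson finite psubset_card_mono)
    obtain l' where l': "nonneg_vec l'" "b - t *\<^sub>R c = col_matrix w *v l'"
      using b'
    proof
      assume "b - t *\<^sub>R c = 0"
      thus ?thesis using that[of 0] by (simp add: nonneg_vec_def)
    qed (use less.hyps b'supp in \<open>meson finite psubset_card_mono\<close>)
    have "b = col_matrix w *v (l' + t *\<^sub>R lc)" using l' lc
      by (simp add: matrix_vector_mult_scaleR matrix_vector_right_distrib algebra_simps)
    moreover have "nonneg_vec (l' + t *\<^sub>R lc)" using lc l' t unfolding nonneg_vec_def by simp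
    ultimately show ?thesis by blast
  qed
qed

section \<open>Copositive forms dominating a square\<close>

definition quad_dominates_square :: "real^'n^'n \<Rightarrow> real^'n \<Rightarrow> 'n set \<Rightarrow> bool" where
  "quad_dominates_square M h I \<longleftrightarrow>
     (\<exists>\<epsilon>>0. \<forall>x. nonneg_vec x \<and> supp x \<subseteq> I \<longrightarrow> \<epsilon> * (h \<bullet> x)^2 \<le> x \<bullet> (M *v x))"

definition nonneg_sphere :: "'n set \<Rightarrow> (real^'n) set" where
  "nonneg_sphere I = {x. nonneg_vec x \<and> supp x \<subseteq> I \<and> norm x = 1}"

lemma compact_nonneg_sphere: "compact (nonneg_sphere I :: (real^'n) set)"
proof -
  have eq: "nonneg_sphere I = (\<Inter>i. {x::real^'n. 0 \<le> x$i}) \<inter> (\<Inter>i\<in>-I. {x. x$i = 0}) \<inter> {x. norm x = 1}"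
    unfolding nonneg_sphere_def nonneg_vec_def supp_def by auto
  have "closed (nonneg_sphere I :: (real^'n) set)" unfolding eq
    by (intro closed_Int closed_INT ballI closed_Collect_le closed_Collect_eq continuous_intros
        continuous_on_component)
  moreover have "bounded (nonneg_sphere I :: (real^'n) set)"
    unfolding nonneg_sphere_def by (auto simp: bounded_iff)
  ultimately show ?thesis by (simp add: compact_eq_bounded_closed)
qed

lemma quad_dominates_square_from_sphere:
  fixes M :: "real^'n^'n"
  assumes "\<epsilon> > 0" and sphere: "\<forall>u\<in>nonneg_sphere I. \<epsilon> * (h \<bullet> u)^2 \<le> u \<bullet> (M *v u)"
  shows "quad_dominates_square M h I"
  unfolding quad_dominates_square_def
proof (intro exI[of _ \<epsilon>] conjI allI impI)
  fix x :: "real^'n" assume x: "nonneg_vec x \<and> supp x \<subseteq> I"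
  show "\<epsilon> * (h \<bullet> x)^2 \<le> x \<bullet> (M *v x)"
  proof (cases "x = 0")
    case False
    define u where "u = (1 / norm x) *\<^sub>R x"
    have u: "u \<in> nonneg_sphere I" unfolding nonneg_sphere_def u_def using x False
      by (auto simp: nonneg_vec_def supp_def)
    have x_eq: "x = norm x *\<^sub>R u" unfolding u_def using False by simp
    have "\<epsilon> * (h \<bullet> x)^2 = (norm x)^2 * (\<epsilon> * (h \<bullet> u)^2)"
      by (subst x_eq) (simp add: power_mult_distrib algebra_simps)
    also have "\<dots> \<le> (norm x)^2 * (u \<bullet> (M *v u))" using sphere u by (intro mult_left_mono) auto
    also have "\<dots> = x \<bullet> (M *v x)"
    proof -
      have "x \<bullet> (M *v x) = (norm x *\<^sub>R u) \<bullet> (M *v (norm x *\<^sub>R u))" by (metis x_eq)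
      thus ?thesis by (simp add: matrix_vector_mult_scaleR power2_eq_square)
    qed
    finally show ?thesis .
  qed (use \<open>\<epsilon> > 0\<close> in simp)
qed (fact \<open>\<epsilon> > 0\<close>)

lemma compact_uniform_from_local:
  assumes K: "compact K"
    and local: "\<And>p. p \<in> K \<Longrightarrow> \<exists>U \<delta>. open U \<and> p \<in> U \<and> \<delta> > 0 \<and> (\<forall>x\<in>U\<inter>K. \<delta> * G x \<le> (F x::real))"
    and G: "\<And>x. x \<in> K \<Longrightarrow> G x \<ge> 0"
  shows "\<exists>\<epsilon>>0. \<forall>x\<in>K. \<epsilon> * G x \<le> F x"
proof -
  obtain U \<delta> where U: "\<And>p. p \<in> K \<Longrightarrow> open (U p) \<and> p \<in> U p \<and> \<delta> p > 0 \<and> (\<forall>x\<in>U p\<inter>K. \<delta> p * G x \<le> F x)"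
    using local by metis
  obtain K' where K': "K' \<subseteq> K" "finite K'" "K \<subseteq> (\<Union>p\<in>K'. U p)"
    using compactE_image[OF K, of K U] U by (metis UN_I subsetI)
  define \<epsilon> where "\<epsilon> = Min (insert 1 (\<delta> ` K'))"
  have "\<epsilon> > 0" unfolding \<epsilon>_def using K' U by (subst Min_gr_iff) auto
  moreover have "\<epsilon> * G x \<le> F x" if x: "x \<in> K" for x
  proof -
    obtain p where p: "p \<in> K'" "x \<in> U p" using K' x by blast
    have "\<epsilon> \<le> \<delta> p" unfolding \<epsilon>_def using p K' by (intro Min_le) auto
    hence "\<epsilon> * G x \<le> \<delta> p * G x" using G[OF x] by (simp add: mult_right_mono)
    also have "\<dots> \<le> F x" using U[of p] p K' x by blast
    finally show ?thesis .
  qed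
  ultimately show ?thesis by blast
qed

lemma local_bound_near_positive:
  fixes M :: "real^'n^'n" and h :: "real^'n"
  assumes fp: "p \<bullet> (M *v p) > 0"
  shows "\<exists>U \<delta>. open U \<and> p \<in> U \<and> \<delta> > 0 \<and> (\<forall>x\<in>U \<inter> K. \<delta> * (h \<bullet> x)^2 \<le> x \<bullet> (M *v x))"
proof -
  define a where "a = p \<bullet> (M *v p)"
  define b where "b = (h \<bullet> p)^2 + 1"
  have b0: "b > 0" unfolding b_def by (simp add: add_nonneg_pos)
  define U where "U = {x. a / 2 < x \<bullet> (M *v x)} \<inter> {x. (h \<bullet> x)^2 < b}"
  have "open U" unfolding U_def
    by (intro open_Int open_Collect_less continuous_intros continuous_on_quad_form)
  moreover have "p \<in> U" unfolding U_def a_def b_def using fp by simp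
  moreover have "a / (2 * b) > 0" using fp b0 a_def by simp
  moreover have "a / (2 * b) * (h \<bullet> x)^2 \<le> x \<bullet> (M *v x)" if "x \<in> U" for x
  proof -
    have x: "a / 2 < x \<bullet> (M *v x)" "(h \<bullet> x)^2 < b" using that unfolding U_def by auto
    have "a / (2 * b) * (h \<bullet> x)^2 \<le> a / (2 * b) * b"
      using x(2) fp b0 a_def by (intro mult_left_mono) auto
    also have "\<dots> = a / 2" using b0 by simp
    finally show ?thesis using x(1) by simp
  qed
  ultimately show ?thesis by blast
qed

text \<open>Near a zero p with (M p)_i \<ge> c > 0 on the coordinates J, split x = y + q with q supported
  on J: the cross term 2 q^T M p \<ge> 2 c \<Sigma> q dominates the two error terms, which are small.\<close>

lemma quad_form_lower_bound_near_zero: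
  fixes M :: "real^'n^'n"
  assumes sym: "symmetric_mat M"
    and q_nonneg: "\<And>i. 0 \<le> q$i"
    and c_le: "\<And>i. q$i \<noteq> 0 \<Longrightarrow> c \<le> (M *v p)$i"
    and small: "3 * (\<Sum>i\<in>UNIV. \<Sum>j\<in>UNIV. \<bar>M$i$j\<bar>) * d \<le> c"
    and y_near: "norm (y - p) \<le> d" and q_small: "norm q \<le> d"
  shows "y \<bullet> (M *v y) + c * (\<Sum>i\<in>UNIV. q$i) \<le> (y + q) \<bullet> (M *v (y + q))"
proof -
  define Bm where "Bm = (\<Sum>i\<in>UNIV. \<Sum>j\<in>UNIV. \<bar>M$i$j\<bar>)"
  define s where "s = (\<Sum>i\<in>UNIV. q$i)"
  have Bm0: "Bm \<ge> 0" unfolding Bm_def by (intro sum_nonneg) auto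
  have s0: "s \<ge> 0" unfolding s_def using q_nonneg by (simp add: sum_nonneg)
  have q_abs: "(\<Sum>i\<in>UNIV. \<bar>q$i\<bar>) = s" unfolding s_def using q_nonneg by simp
  have expand: "(y + q) \<bullet> (M *v (y + q)) =
      y \<bullet> (M *v y) + 2 * (q \<bullet> (M *v p)) + 2 * (q \<bullet> (M *v (y - p))) + q \<bullet> (M *v q)"
    using quad_form_add[OF sym, of y q]
    by (simp add: matrix_vector_mult_diff_distrib inner_diff_right)
  have "c * s \<le> (\<Sum>i\<in>UNIV. q$i * (M *v p)$i)"
    unfolding s_def sum_distrib_left
    by (intro sum_mono) (metis c_le q_nonneg mult.commute mult_left_mono mult_zero_left order_refl)
  hence cross: "c * s \<le> q \<bullet> (M *v p)" by (simp add: inner_real_vec)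
  have "\<bar>q \<bullet> (M *v (y - p))\<bar> \<le> Bm * s * d"
    using bilinear_abs_bound[of q M "y - p"] y_near Bm0 s0 q_abs
    unfolding Bm_def by (smt (verit) mult_left_mono mult_nonneg_nonneg)
  moreover have "\<bar>q \<bullet> (M *v q)\<bar> \<le> Bm * s * d"
    using bilinear_abs_bound[of q M q] q_small Bm0 s0 q_abs
    unfolding Bm_def by (smt (verit) mult_left_mono mult_nonneg_nonneg)
  moreover have "3 * (Bm * s * d) \<le> c * s"
    using mult_right_mono[OF small[folded Bm_def] s0] by (simp add: algebra_simps)
  ultimately show ?thesis using expand cross unfolding s_def by linarith
qed

lemma square_inner_split_bound:
  fixes h y q :: "real^'n"
  assumes q_nonneg: "\<And>i. 0 \<le> q$i" and q_le1: "\<And>i. q$i \<le> 1"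
  shows "(h \<bullet> (y + q))^2 \<le> 2 * (h \<bullet> y)^2 + 2 * ((\<Sum>i\<in>UNIV. \<bar>h$i\<bar>)^2 * CARD('n) * (\<Sum>i\<in>UNIV. q$i))"
proof -
  define H where "H = (\<Sum>i\<in>UNIV. \<bar>h$i\<bar>)"
  define s where "s = (\<Sum>i\<in>UNIV. q$i)"
  have s0: "s \<ge> 0" unfolding s_def using q_nonneg by (simp add: sum_nonneg)
  have q_le_s: "q$i \<le> s" for i unfolding s_def
    by (rule member_le_sum[where f="\<lambda>i. q$i"]) (auto simp: q_nonneg)
  have s_le: "s \<le> CARD('n)" unfolding s_def using sum_mono[of UNIV "\<lambda>i. q$i" "\<lambda>i. 1"] q_le1 by simp
  have "\<bar>h \<bullet> q\<bar> \<le> (\<Sum>i\<in>UNIV. \<bar>h$i * q$i\<bar>)" unfolding inner_real_vec by (rule sum_abs)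
  also have "\<dots> \<le> (\<Sum>i\<in>UNIV. \<bar>h$i\<bar> * s)"
    by (intro sum_mono) (simp add: abs_mult q_nonneg q_le_s mult_left_mono)
  finally have "\<bar>h \<bullet> q\<bar> \<le> H * s" unfolding H_def by (simp add: sum_distrib_right)
  hence "(h \<bullet> q)^2 \<le> (H * s)^2" by (metis abs_ge_zero power2_abs power_mono)
  also have "\<dots> = H^2 * (s * s)" by (simp add: power2_eq_square)
  also have "\<dots> \<le> H^2 * (CARD('n) * s)" using s_le s0 by (intro mult_left_mono mult_right_mono) auto
  finally have hq: "(h \<bullet> q)^2 \<le> H^2 * CARD('n) * s" by (simp add: mult.assoc)
  have "(h \<bullet> (y + q))^2 \<le> 2 * (h \<bullet> y)^2 + 2 * (h \<bullet> q)^2"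
    using sum_squares_ge_zero[of "h \<bullet> y - h \<bullet> q" 0]
    by (simp add: inner_add_right power2_eq_square algebra_simps)
  with hq show ?thesis unfolding H_def s_def by linarith
qed

lemma near_zero_bound:
  fixes M :: "real^'n^'n" and h :: "real^'n"
  assumes sym: "symmetric_mat M" and JI: "J \<subseteq> I"
    and face: "\<And>y. nonneg_vec y \<Longrightarrow> supp y \<subseteq> I - J \<Longrightarrow> \<epsilon>' * (h \<bullet> y)^2 \<le> y \<bullet> (M *v y)"
    and c_le: "\<And>i. i \<in> J \<Longrightarrow> c \<le> (M *v p)$i"
    and p_outside: "\<And>i. i \<notin> I - J \<Longrightarrow> p$i = 0"
    and small: "3 * (\<Sum>i\<in>UNIV. \<Sum>j\<in>UNIV. \<bar>M$i$j\<bar>) * r \<le> c"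
    and \<delta>: "0 \<le> \<delta>" "2 * \<delta> \<le> \<epsilon>'" "2 * \<delta> * ((\<Sum>i\<in>UNIV. \<bar>h$i\<bar>)^2 * CARD('n)) \<le> c"
    and x: "x \<in> nonneg_sphere I" "norm (x - p) \<le> r"
  shows "\<delta> * (h \<bullet> x)^2 \<le> x \<bullet> (M *v x)"
proof -
  define y where "y = (\<chi> i. if i \<in> I - J then x$i else 0)"
  define q where "q = (\<chi> i. if i \<in> J then x$i else 0)"
  define HN where "HN = (\<Sum>i\<in>UNIV. \<bar>h$i\<bar>)^2 * CARD('n)"
  have x_split: "x = y + q"
    using x(1) JI unfolding y_def q_def nonneg_sphere_def supp_def by (auto simp: vec_eq_iff)
  have y: "nonneg_vec y" "supp y \<subseteq> I - J"
    using x(1) unfolding y_def nonneg_vec_def nonneg_sphere_def supp_def by auto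
  have q_nonneg: "0 \<le> q$i" for i using x(1) unfolding q_def nonneg_vec_def nonneg_sphere_def by auto
  have q_le1: "q$i \<le> 1" for i
    using component_le_norm_cart[of x i] x(1) unfolding q_def nonneg_sphere_def by auto
  have "norm (y - p) \<le> norm (x - p)" "norm q \<le> norm (x - p)"
    by (auto intro!: norm_le_componentwise_cart simp: y_def q_def p_outside)
  hence near: "norm (y - p) \<le> r" "norm q \<le> r" using x(2) by auto
  have "c \<le> (M *v p)$i" if "q$i \<noteq> 0" for i
    using that c_le unfolding q_def by (auto split: if_splits)
  hence quad: "y \<bullet> (M *v y) + c * (\<Sum>i\<in>UNIV. q$i) \<le> x \<bullet> (M *v x)"
    using quad_form_lower_bound_near_zero[OF sym q_nonneg _ small near] unfolding x_split by blast
  have sq: "(h \<bullet> x)^2 \<le> 2 * (h \<bullet> y)^2 + 2 * (HN * (\<Sum>i\<in>UNIV. q$i))"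
    using square_inner_split_bound[OF q_nonneg q_le1] unfolding x_split HN_def .
  have s0: "0 \<le> (\<Sum>i\<in>UNIV. q$i)" using q_nonneg by (simp add: sum_nonneg)
  have "\<delta> * (h \<bullet> x)^2 \<le> \<delta> * (2 * (h \<bullet> y)^2 + 2 * (HN * (\<Sum>i\<in>UNIV. q$i)))"
    using mult_left_mono[OF sq \<delta>(1)] .
  also have "\<dots> = (2 * \<delta>) * (h \<bullet> y)^2 + (2 * \<delta> * HN) * (\<Sum>i\<in>UNIV. q$i)"
    by (simp add: algebra_simps)
  also have "\<dots> \<le> \<epsilon>' * (h \<bullet> y)^2 + c * (\<Sum>i\<in>UNIV. q$i)"
    using \<delta>(2,3) s0 unfolding HN_def by (intro add_mono mult_right_mono) auto
  also have "\<dots> \<le> x \<bullet> (M *v x)" using quad face[OF y] by linarith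
  finally show ?thesis .
qed

lemma local_bound_near_zero:
  fixes M :: "real^'n^'n" and h :: "real^'n"
  assumes cop: "copositive M" and p: "is_zero M p" and pI: "supp p \<subseteq> I"
    and J_def: "J = {i\<in>I. (M *v p)$i \<noteq> 0}" and J_ne: "J \<noteq> {}"
    and face: "quad_dominates_square M h (I - J)"
  shows "\<exists>U \<delta>. open U \<and> p \<in> U \<and> \<delta> > 0 \<and>
           (\<forall>x\<in>U \<inter> nonneg_sphere I. \<delta> * (h \<bullet> x)^2 \<le> x \<bullet> (M *v x))"
proof -
  have sym: "symmetric_mat M" using cop unfolding copositive_def by simp
  obtain \<epsilon>' where e'0: "\<epsilon>' > 0"
    and e': "\<And>y. nonneg_vec y \<Longrightarrow> supp y \<subseteq> I - J \<Longrightarrow> \<epsilon>' * (h \<bullet> y)^2 \<le> y \<bullet> (M *v y)"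
    using face unfolding quad_dominates_square_def by blast
  define c where "c = Min ((\<lambda>i. (M *v p)$i) ` J)"
  have c0: "c > 0" unfolding c_def using J_ne
    by (subst Min_gr_iff) (auto simp: J_def
        intro: order.not_eq_order_implies_strict[OF _ copositive_zero_mult_nonneg[OF cop p]])
  have c_le: "c \<le> (M *v p)$i" if "i \<in> J" for i unfolding c_def using that by simp
  define Bm where "Bm = (\<Sum>i\<in>UNIV. \<Sum>j\<in>UNIV. \<bar>M$i$j\<bar>)"
  define HN where "HN = (\<Sum>i\<in>UNIV. \<bar>h$i\<bar>)^2 * CARD('n)"
  have Bm0: "Bm \<ge> 0" unfolding Bm_def by (intro sum_nonneg) auto
  have HN0: "HN \<ge> 0" unfolding HN_def by simp
  define r where "r = c / (3 * Bm + 1)"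
  define \<delta> where "\<delta> = min (\<epsilon>' / 2) (c / (2 * HN + 1))"
  have r0: "r > 0" unfolding r_def using c0 Bm0 by simp
  have \<delta>0: "\<delta> > 0" unfolding \<delta>_def using c0 e'0 HN0 by simp
  have small: "3 * Bm * r \<le> c" unfolding r_def using c0 Bm0 by (simp add: field_simps)
  have "\<delta> \<le> c / (2 * HN + 1)" unfolding \<delta>_def by simp
  hence "\<delta> * (2 * HN + 1) \<le> c" using HN0 by (simp add: pos_le_divide_eq)
  hence \<delta>_HN: "2 * \<delta> * HN \<le> c" using \<delta>0 by (simp add: algebra_simps)
  have p_outside: "p$i = 0" if "i \<notin> I - J" for i
    using that pI copositive_zero_mult_eq_0[OF cop p] unfolding J_def supp_def by auto
  have JI: "J \<subseteq> I" using J_def by auto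
  have "\<delta> * (h \<bullet> x)^2 \<le> x \<bullet> (M *v x)" if "x \<in> nonneg_sphere I" "norm (x - p) < r" for x
    by (rule near_zero_bound[OF sym JI e' c_le p_outside small[unfolded Bm_def]])
      (use that \<delta>0 \<delta>_HN in \<open>auto simp: \<delta>_def HN_def\<close>)
  thus ?thesis using \<delta>0 r0
    by (intro exI[of _ "ball p r"] exI[of _ \<delta>]) (auto simp: dist_norm norm_minus_commute)
qed

text \<open>If a zero z inside the face I has M z vanishing on I, subtracting a multiple of z from x
  changes neither x^T M x nor h^T x and moves x to a smaller face.\<close>

lemma quad_dominates_square_via_zero:
  fixes M :: "real^'n^'n" and h :: "real^'n"
  assumes cop: "copositive M" and hz: "\<And>z. is_zero M z \<Longrightarrow> h \<bullet> z = 0"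
    and z: "is_zero M z" and zI: "supp z \<subseteq> I" and Mz: "\<forall>i\<in>I. (M *v z)$i = 0"
    and faces: "\<And>i. i \<in> supp z \<Longrightarrow> quad_dominates_square M h (I - {i})"
  shows "quad_dominates_square M h I"
proof -
  have sym: "symmetric_mat M" using cop unfolding copositive_def by simp
  obtain e where e: "\<And>i. i \<in> supp z \<Longrightarrow> e i > 0 \<and>
      (\<forall>x. nonneg_vec x \<and> supp x \<subseteq> I - {i} \<longrightarrow> e i * (h \<bullet> x)^2 \<le> x \<bullet> (M *v x))"
    using faces unfolding quad_dominates_square_def by metis
  have znn: "nonneg_vec z" "z \<noteq> 0" using z unfolding is_zero_def by auto
  have fin: "finite (supp z)" "supp z \<noteq> {}" using znn unfolding supp_def by (auto simp: vec_eq_iff)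
  define \<epsilon> where "\<epsilon> = Min (e ` supp z)"
  have e0: "\<epsilon> > 0" unfolding \<epsilon>_def using fin e by (subst Min_gr_iff) auto
  have "\<epsilon> * (h \<bullet> x)^2 \<le> x \<bullet> (M *v x)" if x: "nonneg_vec x" "supp x \<subseteq> I" for x
  proof -
    obtain j t where j: "z$j > 0" and t: "nonneg_vec (x - t *\<^sub>R z)"
      and ys: "supp (x - t *\<^sub>R z) \<subseteq> (supp x \<union> supp z) - {j}"
      using nonneg_vec_reduce_support[OF x(1) znn] by metis
    have jz: "j \<in> supp z" using j unfolding supp_def by simp
    have "z \<bullet> (M *v x) = x \<bullet> (M *v z)" by (rule symmetric_bilinear_commute[OF sym])
    also have "\<dots> = 0" unfolding inner_real_vec
      using x(2) Mz by (intro sum.neutral ballI) (auto simp: supp_def)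
    finally have "(x - t *\<^sub>R z) \<bullet> (M *v (x - t *\<^sub>R z)) = x \<bullet> (M *v x)"
      using quad_form_diff_isotropic[OF sym] z unfolding is_zero_def by blast
    moreover have "h \<bullet> (x - t *\<^sub>R z) = h \<bullet> x" using hz[OF z] by (simp add: inner_diff_right)
    moreover have "supp (x - t *\<^sub>R z) \<subseteq> I - {j}" using ys x(2) zI by blast
    ultimately have "e j * (h \<bullet> x)^2 \<le> x \<bullet> (M *v x)" using e[OF jz] t by metis
    moreover have "\<epsilon> * (h \<bullet> x)^2 \<le> e j * (h \<bullet> x)^2"
      unfolding \<epsilon>_def using fin jz by (intro mult_right_mono) simp_all
    ultimately show ?thesis by linarith
  qed
  thus ?thesis using e0 unfolding quad_dominates_square_def by blast
qed

lemma local_bound_on_nonneg_sphere: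
  fixes M :: "real^'n^'n" and h :: "real^'n"
  assumes cop: "copositive M"
    and no_flat_zero: "\<not> (\<exists>z. is_zero M z \<and> supp z \<subseteq> I \<and> (\<forall>i\<in>I. (M *v z)$i = 0))"
    and faces: "\<And>J. J \<subset> I \<Longrightarrow> quad_dominates_square M h J"
    and p: "p \<in> nonneg_sphere I"
  shows "\<exists>U \<delta>. open U \<and> p \<in> U \<and> \<delta> > 0 \<and>
           (\<forall>x\<in>U \<inter> nonneg_sphere I. \<delta> * (h \<bullet> x)^2 \<le> x \<bullet> (M *v x))"
proof (cases "p \<bullet> (M *v p) > 0")
  case True thus ?thesis by (rule local_bound_near_positive)
next
  case False
  have pnn: "nonneg_vec p" "supp p \<subseteq> I" "norm p = 1" using p unfolding nonneg_sphere_def by auto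
  moreover have "p \<bullet> (M *v p) = 0" using False pnn(1) cop unfolding copositive_def by force
  ultimately have pz: "is_zero M p" unfolding is_zero_def by auto
  define J where "J = {i\<in>I. (M *v p)$i \<noteq> 0}"
  have "J \<noteq> {}" using no_flat_zero pz pnn unfolding J_def by blast
  moreover have "quad_dominates_square M h (I - J)"
    using \<open>J \<noteq> {}\<close> J_def by (intro faces) blast
  ultimately show ?thesis by (rule local_bound_near_zero[OF cop pz pnn(2) J_def])
qed

text \<open>Induction over the faces of R^n_+: either some zero z has M z vanishing on the face I,
  or the bound holds near every point of the compact set nonneg_sphere I.\<close>

lemma copositive_dominates_square:
  fixes M :: "real^'n^'n" and h :: "real^'n"
  assumes cop: "copositive M" and hz: "\<And>z. is_zero M z \<Longrightarrow> h \<bullet> z = 0"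
  shows "quad_dominates_square M h I"
proof -
  have "finite I" by simp
  thus ?thesis
  proof (induction I rule: finite_psubset_induct)
    case (psubset I)
    show ?case
    proof (cases "\<exists>z. is_zero M z \<and> supp z \<subseteq> I \<and> (\<forall>i\<in>I. (M *v z)$i = 0)")
      case True
      then obtain z where z: "is_zero M z" "supp z \<subseteq> I" "\<forall>i\<in>I. (M *v z)$i = 0" by blast
      show ?thesis
      proof (rule quad_dominates_square_via_zero[OF cop hz z])
        fix i assume "i \<in> supp z"
        hence "I - {i} \<subset> I" using z(2) by blast
        thus "quad_dominates_square M h (I - {i})" by (rule psubset.IH)
      qed
    next
      case False
      then obtain \<epsilon> where "\<epsilon> > 0" "\<forall>x\<in>nonneg_sphere I. \<epsilon> * (h \<bullet> x)^2 \<le> x \<bullet> (M *v x)"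
        using compact_uniform_from_local[OF compact_nonneg_sphere,
            of I "\<lambda>x. (h \<bullet> x)^2" "\<lambda>x. x \<bullet> (M *v x)"]
          local_bound_on_nonneg_sphere[OF cop _ psubset.IH] by auto
      thus ?thesis by (rule quad_dominates_square_from_sphere)
    qed
  qed
qed

section \<open>Zeros of exceptional extremal matrices span\<close>

lemma outer_mult_vec: "outer h *v x = (h \<bullet> x) *\<^sub>R h"
  by (simp add: vec_eq_iff outer_def matrix_vector_mult_def inner_real_vec sum_distrib_left
      sum_distrib_right mult_ac)

lemma quad_form_outer: "x \<bullet> (outer h *v x) = (h \<bullet> x)^2"
  by (simp add: outer_mult_vec power2_eq_square inner_commute)

lemma symmetric_scaled_outer: "symmetric_mat (k *\<^sub>R outer h)"
  by (simp add: symmetric_mat_def transpose_def outer_def vec_eq_iff mult.commute)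

lemma extremal_dominating_square_psd:
  fixes M :: "real^'n^'n"
  assumes ext: "extremal M" and h: "h \<noteq> 0" and e0: "\<epsilon> > 0"
    and dom: "\<And>x. nonneg_vec x \<Longrightarrow> \<epsilon> * (h \<bullet> x)^2 \<le> x \<bullet> (M *v x)"
  shows "psd M"
proof -
  have sym: "symmetric_mat M" using ext unfolding extremal_def copositive_def by simp
  define X where "X = \<epsilon> *\<^sub>R outer h"
  have X_quad: "x \<bullet> (X *v x) = \<epsilon> * (h \<bullet> x)^2" for x
    unfolding X_def by (simp flip: scaleR_matrix_vector_assoc add: quad_form_outer)
  have "copositive X" unfolding copositive_def
    using X_quad e0 symmetric_scaled_outer X_def by simp
  moreover have "copositive (M - X)" unfolding copositive_def
  proof (intro conjI allI impI)
    show "symmetric_mat (M - X)" using sym symmetric_scaled_outer[of \<epsilon> h]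
      unfolding symmetric_mat_def X_def by (simp add: transpose_def vec_eq_iff)
    fix x :: "real^'n" assume "nonneg_vec x"
    thus "0 \<le> x \<bullet> ((M - X) *v x)"
      using dom X_quad[of x] by (simp add: matrix_vector_mult_diff_rdistrib inner_diff_right)
  qed
  moreover have "M = X + (M - X)" by simp
  ultimately obtain a where a: "a \<ge> 0" "X = a *\<^sub>R M"
    using ext unfolding extremal_def by blast
  have "a \<noteq> 0"
  proof
    assume "a = 0"
    hence "X $ i $ i = 0" for i using a by simp
    hence "\<epsilon> * (h$i * h$i) = 0" for i unfolding X_def outer_def by simp
    thus False using h e0 by (simp add: vec_eq_iff)
  qed
  have "x \<bullet> (M *v x) = (1/a) * (x \<bullet> (X *v x))" for x
    using \<open>a \<noteq> 0\<close> by (simp add: a(2) flip: scaleR_matrix_vector_assoc)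
  thus ?thesis unfolding psd_def using sym X_quad a(1) e0 by simp
qed

lemma exceptional_extremal_zeros_span:
  fixes M :: "real^'n^'n"
  assumes exc: "exceptional M" and ext: "extremal M"
  shows "span {z. is_zero M z} = UNIV"
proof (rule ccontr)
  assume "span {z. is_zero M z} \<noteq> UNIV"
  then obtain h where h: "h \<noteq> 0" "span {z. is_zero M z} \<subseteq> {x. h \<bullet> x = 0}"
    using span_not_univ_subset_hyperplane by blast
  have cop: "copositive M" using exc unfolding exceptional_def by simp
  have "h \<bullet> z = 0" if "is_zero M z" for z
    using h(2) span_base[of z "{z. is_zero M z}"] that by auto
  hence "quad_dominates_square M h UNIV" by (rule copositive_dominates_square[OF cop])
  then obtain \<epsilon> where "\<epsilon> > 0" "\<And>x. nonneg_vec x \<Longrightarrow> \<epsilon> * (h \<bullet> x)^2 \<le> x \<bullet> (M *v x)"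
    unfolding quad_dominates_square_def by blast
  hence "psd M" using extremal_dominating_square_psd[OF ext h(1)] by blast
  moreover have "symmetric_mat (0::real^'n^'n)" "nonneg_mat (0::real^'n^'n)"
    unfolding symmetric_mat_def nonneg_mat_def by (auto simp: transpose_def vec_eq_iff)
  ultimately show False using exc unfolding exceptional_def by (metis add.right_neutral)
qed

lemma representative_zeros_range_multiple:
  assumes "representative_zeros M (range w)" and "minimal_zero M z"
  shows "\<exists>i t. t > 0 \<and> z = t *\<^sub>R w i"
  using assms unfolding representative_zeros_def by blast

lemma representative_zeros_col_matrix_surj:
  fixes M :: "real^'n^'n"
  assumes exc: "exceptional M" and ext: "extremal M" and rep: "representative_zeros M (range w)"
  shows "surj ((*v) (col_matrix w))"
proof -
  have cop: "copositive M" using exc unfolding exceptional_def by simp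
  have "{z. is_zero M z} \<subseteq> range ((*v) (col_matrix w))"
    using copositive_zero_in_cone[OF cop representative_zeros_range_multiple[OF rep]] by blast
  hence "span {z. is_zero M z} \<subseteq> range ((*v) (col_matrix w))"
    by (intro span_minimal linear_subspace_image subspace_UNIV) simp_all
  thus ?thesis using exceptional_extremal_zeros_span[OF exc ext] by auto
qed

section \<open>Factorizations under congruence\<close>

lemma matrix_mul_add_rdistrib: "((A::real^'n^'m) + B) ** (C::real^'k^'n) = A ** C + B ** C"
  by (simp add: matrix_matrix_mult_def vec_eq_iff sum.distrib distrib_right)

lemma trace_outer_mult: "trace (outer b ** M) = b \<bullet> (M *v b)"
proof -
  have "trace (outer b ** M) = (\<Sum>i\<in>UNIV. \<Sum>k\<in>UNIV. b$i * b$k * M$k$i)"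
    by (simp add: trace_def matrix_matrix_mult_def outer_def)
  also have "\<dots> = (\<Sum>k\<in>UNIV. \<Sum>i\<in>UNIV. b$i * b$k * M$k$i)" by (rule sum.swap)
  also have "\<dots> = b \<bullet> (M *v b)"
    by (simp add: inner_real_vec matrix_vector_mult_def sum_distrib_left mult_ac)
  finally show ?thesis .
qed

lemma trace_sum_list_outer_mult:
  "trace (sum_list (map outer bs) ** M) = sum_list (map (\<lambda>b. b \<bullet> (M *v b)) bs)"
  by (induction bs) (simp add: trace_def, simp add: matrix_mul_add_rdistrib trace_add trace_outer_mult)

lemma nonneg_factorization_trace_zero:
  fixes M :: "real^'n^'n"
  assumes cop: "copositive M" and nf: "nonneg_factorization A bs" and tr: "trace (A ** M) = 0"
    and b: "b \<in> set bs"
  shows "b = 0 \<or> is_zero M b"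
proof -
  have A: "A = sum_list (map outer bs)" and nn: "\<forall>b\<in>set bs. nonneg_vec b"
    using nf unfolding nonneg_factorization_def by auto
  have "\<forall>b\<in>set bs. 0 \<le> b \<bullet> (M *v b)" using nn cop unfolding copositive_def by blast
  moreover have "sum_list (map (\<lambda>b. b \<bullet> (M *v b)) bs) = 0"
    using tr A trace_sum_list_outer_mult by metis
  ultimately have "b \<bullet> (M *v b) = 0" using b by (subst (asm) sum_list_nonneg_eq_0_iff) auto
  thus ?thesis using nn b unfolding is_zero_def by auto
qed

lemma outer_congruence: "outer ((P::real^'n^'n) *v b) = P ** outer b ** transpose P"
proof -
  have "(P ** outer b ** transpose P) $ i $ j = (P *v b)$i * (P *v b)$j" for i j
  proof -
    have "(P ** outer b ** transpose P) $ i $ j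
        = (\<Sum>l\<in>UNIV. \<Sum>k\<in>UNIV. (P$i$k * b$k) * (P$j$l * b$l))"
      by (simp add: matrix_matrix_mult_def outer_def transpose_def sum_distrib_left
          sum_distrib_right mult_ac)
    also have "\<dots> = (\<Sum>k\<in>UNIV. P$i$k * b$k) * (\<Sum>l\<in>UNIV. P$j$l * b$l)"
      by (subst sum.swap) (simp add: sum_product)
    finally show ?thesis by (simp add: matrix_vector_mult_def)
  qed
  thus ?thesis by (simp add: vec_eq_iff outer_def)
qed

lemma sum_list_outer_congruence:
  "sum_list (map (outer \<circ> (*v) (P::real^'n^'n)) bs) = P ** sum_list (map outer bs) ** transpose P"
  by (induction bs) (simp_all add: matrix_add_ldistrib matrix_mul_add_rdistrib outer_congruence)

lemma sum_outer_congruence: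
  "finite S \<Longrightarrow> (\<Sum>b\<in>S. outer ((P::real^'n^'n) *v b)) = P ** (\<Sum>b\<in>S. outer b) ** transpose P"
  by (induction S rule: finite_induct) (simp_all add: matrix_add_ldistrib matrix_mul_add_rdistrib
      outer_congruence)

lemma nonneg_factorization_congruence:
  assumes "nonneg_factorization X bs" and "\<forall>b\<in>set bs. nonneg_vec ((P::real^'n^'n) *v b)"
  shows "nonneg_factorization (P ** X ** transpose P) (map ((*v) P) bs)"
  using assms unfolding nonneg_factorization_def by (auto simp: sum_list_outer_congruence)

lemma cp_factorization_congruence:
  assumes S: "S \<in> cp_factorizations X" and nn: "\<forall>b\<in>S. nonneg_vec ((P::real^'n^'n) *v b)"
    and inj: "inj ((*v) P)"
  shows "(*v) P ` S \<in> cp_factorizations (P ** X ** transpose P)"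
proof -
  have S': "finite S" "\<forall>b\<in>S. \<forall>c\<in>S. b \<noteq> c \<longrightarrow> independent {b, c}" "X = (\<Sum>b\<in>S. outer b)"
    using S unfolding cp_factorizations_def by auto
  have "independent {P *v b, P *v c}" if "b \<in> S" "c \<in> S" "P *v b \<noteq> P *v c" for b c
  proof -
    have "b \<noteq> c" using that by auto
    hence "independent {b, c}" using S' that by blast
    hence "independent ((*v) P ` {b, c})"
      by (rule linear_independent_injective_image[OF matrix_vector_mul_linear])
         (rule inj_on_subset[OF inj], simp)
    thus ?thesis by simp
  qed
  moreover have "(\<Sum>c\<in>(*v) P ` S. outer c) = P ** X ** transpose P"
    using S' by (subst sum.reindex) (auto intro: inj_on_subset[OF inj] simp: sum_outer_congruence)
  ultimately show ?thesis using S'(1) nn unfolding cp_factorizations_def by auto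
qed

lemma cp_factorization_as_list:
  assumes "S \<in> cp_factorizations A"
  obtains bs where "set bs = S" "nonneg_factorization A bs"
proof -
  have fin: "finite S" using assms unfolding cp_factorizations_def by auto
  obtain bs where bs: "set bs = S" "distinct bs" using finite_distinct_list[OF fin] by blast
  have "nonneg_factorization A bs" unfolding nonneg_factorization_def
    using assms bs by (simp add: cp_factorizations_def sum_list_distinct_conv_sum_set)
  with bs show ?thesis using that by blast
qed

locale cp_congruence =
  fixes A V B :: "real^'n^'n"
  assumes right_inverse: "V ** B = mat 1"
    and V_nonneg: "\<And>c. nonneg_vec c \<Longrightarrow> nonneg_vec (V *v c)"
    and B_nonneg_on_factors: "\<And>bs b. nonneg_factorization A bs \<Longrightarrow> b \<in> set bs \<Longrightarrow> nonneg_vec (B *v b)"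
begin

abbreviation C where "C \<equiv> B ** A ** transpose B"

lemma left_inverse: "B ** V = mat 1"
  using right_inverse matrix_left_right_inverse by blast

lemma A_eq: "A = V ** C ** transpose V"
proof -
  have "V ** C ** transpose V = (V ** B) ** A ** transpose (V ** B)"
    by (simp add: matrix_mul_assoc matrix_transpose_mul)
  thus ?thesis by (simp add: right_inverse)
qed

lemma inj_B: "inj ((*v) B)" and inj_V: "inj ((*v) V)"
  using matrix_left_invertible_injective right_inverse left_inverse by blast+

lemma B_V_cancel: "B *v (V *v c) = c" and V_B_cancel: "V *v (B *v b) = b"
  by (simp_all add: matrix_vector_mul_assoc left_inverse right_inverse)

lemma factorization_to_C:
  "nonneg_factorization A bs \<Longrightarrow> nonneg_factorization C (map ((*v) B) bs)"
  using nonneg_factorization_congruence B_nonneg_on_factors by blast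

lemma factorization_to_A:
  assumes "nonneg_factorization C cs"
  shows "nonneg_factorization A (map ((*v) V) cs)"
  using nonneg_factorization_congruence[OF assms] assms V_nonneg A_eq
  unfolding nonneg_factorization_def by metis

lemma completely_positive_C: "completely_positive A \<Longrightarrow> completely_positive C"
  using factorization_to_C unfolding completely_positive_def by blast

lemma cp_rank_eq: "cp_rank A = cp_rank C"
proof -
  have "(\<exists>bs. length bs = k \<and> nonneg_factorization A bs) \<longleftrightarrow>
        (\<exists>cs. length cs = k \<and> nonneg_factorization C cs)" for k
    using factorization_to_A factorization_to_C by (metis length_map)
  thus ?thesis unfolding cp_rank_def by simp
qed

lemma cp_factorization_to_C: "S \<in> cp_factorizations A \<Longrightarrow> (*v) B ` S \<in> cp_factorizations C"
  by (metis cp_factorization_as_list cp_factorization_congruence B_nonneg_on_factors inj_B)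

lemma cp_factorization_to_A: "T \<in> cp_factorizations C \<Longrightarrow> (*v) V ` T \<in> cp_factorizations A"
  using cp_factorization_congruence[of T C V] V_nonneg inj_V A_eq
  unfolding cp_factorizations_def by auto

lemma cp_factorizations_bij:
  "bij_betw ((`) ((*v) B)) (cp_factorizations A) (cp_factorizations C)"
  by (rule bij_betw_byWitness[where f'="(`) ((*v) V)"])
     (auto simp: image_image B_V_cancel V_B_cancel cp_factorization_to_C cp_factorization_to_A)

lemma minimal_cp_factorizations_bij:
  "bij_betw ((`) ((*v) B)) (minimal_cp_factorizations A) (minimal_cp_factorizations C)"
  by (rule bij_betw_byWitness[where f'="(`) ((*v) V)"])
     (auto simp: minimal_cp_factorizations_def image_image B_V_cancel V_B_cancel cp_rank_eq
       cp_factorization_to_C cp_factorization_to_A card_image inj_on_subset[OF inj_B]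
       inj_on_subset[OF inj_V])

end

lemma representative_zeros_cp_congruence:
  fixes M A :: "real^'n^'n"
  assumes exc: "exceptional M" and ext: "extremal M" and rep: "representative_zeros M (range w)"
    and tr: "trace (A ** M) = 0"
  obtains B where "cp_congruence A (col_matrix w) B"
proof -
  have cop: "copositive M" using exc unfolding exceptional_def by simp
  have w_nonneg: "nonneg_vec (w j)" for j
    using rep unfolding representative_zeros_def minimal_zero_def is_zero_def by auto
  obtain B where VB: "col_matrix w ** B = mat 1"
    using representative_zeros_col_matrix_surj[OF exc ext rep] matrix_right_invertible_surjective
    by blast
  hence BV: "B *v (col_matrix w *v l) = l" for l
    by (simp add: matrix_vector_mul_assoc matrix_left_right_inverse)
  have "nonneg_vec (B *v b)" if "nonneg_factorization A bs" "b \<in> set bs" for bs b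
  proof -
    have "b = 0 \<or> is_zero M b" using nonneg_factorization_trace_zero[OF cop that(1) tr that(2)] .
    thus ?thesis
    proof
      assume "is_zero M b"
      then obtain l where "nonneg_vec l" "b = col_matrix w *v l"
        using copositive_zero_in_cone[OF cop representative_zeros_range_multiple[OF rep]] by blast
      thus ?thesis using BV by simp
    qed (simp add: nonneg_vec_def)
  qed
  hence "cp_congruence A (col_matrix w) B"
    using VB col_matrix_nonneg w_nonneg by unfold_locales auto
  thus ?thesis by (rule that)
qed

theorem lemma4p5:
  fixes M :: "real^'n^'n" and w :: "'n \<Rightarrow> real^'n"
  assumes "exceptional M" and "extremal M"
    and "inj w" and "representative_zeros M (range w)"
  shows "\<forall>A. completely_positive A \<and> trace (A ** M) = 0 \<longrightarrow>
           (\<exists>C. completely_positive C \<and>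
                A = col_matrix w ** C ** transpose (col_matrix w) \<and>
                cp_rank A = cp_rank C \<and>
                cp_factorizations A \<approx> cp_factorizations C \<and>
                minimal_cp_factorizations A \<approx> minimal_cp_factorizations C)"
proof (intro allI impI)
  fix A :: "real^'n^'n"
  assume A: "completely_positive A \<and> trace (A ** M) = 0"
  then obtain B where "cp_congruence A (col_matrix w) B"
    using representative_zeros_cp_congruence[OF assms(1,2,4)] by blast
  then interpret cp_congruence A "col_matrix w" B .
  show "\<exists>C. completely_positive C \<and> A = col_matrix w ** C ** transpose (col_matrix w) \<and>
      cp_rank A = cp_rank C \<and> cp_factorizations A \<approx> cp_factorizations C \<and>
      minimal_cp_factorizations A \<approx> minimal_cp_factorizations C"
    using completely_positive_C A A_eq cp_rank_eq cp_factorizations_bij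
      minimal_cp_factorizations_bij unfolding eqpoll_def by blast
qed

end
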